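(* Let $n\ge 2$ be an integer, $k,c_b>0$, $\rho_0>0$, and let $\lambda_{1,0}\le\cdots\le\lambda_{n,0}$ be real numbers. Consider the system $$\lambda_i'=-\lambda_i^2+\frac{k}{n}(\rho-c_b)\ (i=1,\dots,n),\qquad \rho'=-\rho\lambda,\quad \lambda=\sum_{i=1}^n\lambda_i,\qquad \rho(0)=\rho_0,\ \lambda_i(0)=\lambda_{i,0},$$ suppose its maximal interval of existence is $[0,t_B)$ with $0<t_B<\infty$, and let $u_i(t)=e^{\int_0^t\lambda_i(s)\,ds}$. Let $1\le J_1\le J_2\le n$ be integers such that $\lim_{t\to t_B^-}\lambda_i(t)=-\infty$ for $1\le i\le J_1$ and $\lim_{t\to t_B^-}\lambda_i(t)=+\infty$ for $J_2<i\le n$. Then $\lambda_{i,0}=\lambda_{j,0}$ and $\lambda_i(t)=\lambda_j(t)$ for all $t$ whenever $1\le i,j\le J_1$; $\lim_{t\to t_B^-}\lambda_i(t)/\lambda_j(t)=1$ whenever $J_2<i,j\le n$; and $$\lim_{t\to t_B^-}\frac{u_j(t)}{u_n(t)}=\frac{\lambda_{j,0}-\lambda_{1,0}}{\lambda_{n,0}-\lambda_{1,0}}\qquad\text{for } J_2<j<n.$$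
   Context: Solutions are real-valued and continuously differentiable on $[0,t_B)$. *)

theory Defs
  imports "HOL-Analysis.Analysis"
begin

definition is_solution ::
  "nat \<Rightarrow> real \<Rightarrow> real \<Rightarrow> real \<Rightarrow> (nat \<Rightarrow> real) \<Rightarrow> real
     \<Rightarrow> (nat \<Rightarrow> real \<Rightarrow> real) \<Rightarrow> (real \<Rightarrow> real) \<Rightarrow> bool" where
  "is_solution n k cb rho0 lam0 T lam rho \<longleftrightarrow>
     0 < T \<and>
     rho 0 = rho0 \<and> (\<forall>i\<in>{1..n}. lam i 0 = lam0 i) \<and>
     (\<forall>i\<in>{1..n}. continuous_on {0..<T} (\<lambda>t. - ((lam i t) ^ 2) + (k / real n) * (rho t - cb))) \<and>
     continuous_on {0..<T} (\<lambda>t. - rho t * (\<Sum>i=1..n. lam i t)) \<and>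
     (\<forall>t\<in>{0..<T}.
        (\<forall>i\<in>{1..n}. (lam i has_real_derivative
            (- ((lam i t) ^ 2) + (k / real n) * (rho t - cb))) (at t within {0..<T})) \<and>
        (rho has_real_derivative (- rho t * (\<Sum>i=1..n. lam i t))) (at t within {0..<T}))"

definition maximal_solution ::
  "nat \<Rightarrow> real \<Rightarrow> real \<Rightarrow> real \<Rightarrow> (nat \<Rightarrow> real) \<Rightarrow> real
     \<Rightarrow> (nat \<Rightarrow> real \<Rightarrow> real) \<Rightarrow> (real \<Rightarrow> real) \<Rightarrow> bool" where
  "maximal_solution n k cb rho0 lam0 T lam rho \<longleftrightarrow>
     is_solution n k cb rho0 lam0 T lam rho \<and>
     \<not> (\<exists>T' > T. \<exists>mu sigma. is_solution n k cb rho0 lam0 T' mu sigma)"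

definition u_fun :: "(nat \<Rightarrow> real \<Rightarrow> real) \<Rightarrow> nat \<Rightarrow> real \<Rightarrow> real" where
  "u_fun lam i t = exp (integral {0..t} (lam i))"

end

theory Submission
  imports Defs "HOL-Real_Asymp.Real_Asymp"
begin

(* Every lam_i solves the Riccati equation lam' = -lam^2 + q with the same forcing
   q = (k/n)(rho - cb), and q is bounded below since rho = rho0 exp(-int sum_i lam_i) > 0.
   With u_i' = lam_i u_i, the forcing cancels in (lam_j - lam_i)' = lam_i^2 - lam_j^2, so
   u_i u_j (lam_j - lam_i) is a constant of motion, equal to lam_j(0) - lam_i(0).

   If lam_b -> -oo, then 1/(-lam_b) + 2t is nondecreasing near tB with limit 2 tB, whence
   -lam_b >= 1/(2(tB - t)) and u_b^2 = O(tB - t).  For a with lam_a(0) < lam_b(0) the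
   positive function u_a/u_b would then have derivative -(lam_b(0) - lam_a(0))/u_b^2
   <= -const/(tB - t), which drives it to -oo; so a blow-down component has the smallest
   initial value, and all blow-down components agree.  If lam_i -> +oo, u_i is eventually
   increasing, hence bounded below, so lam_i/lam_j = 1 - (lam_j(0) - lam_i(0))/(u_i u_j lam_j)
   -> 1.  Finally the constants of motion for the pairs (1,j), (1,n), (j,n) give
   u_j/u_n = d_j/d_n + (1 - d_j/d_n) u_1/u_n with d_i = lam_i(0) - lam_1(0), where
   u_1/u_n -> 0 because u_1 -> 0 and u_n is bounded below. *)

lemma eventually_at_leftE:
  fixes T :: real
  assumes "eventually P (at_left T)" "a < T"
  obtains t0 where "a < t0" "t0 < T" "\<And>t. t0 \<le> t \<Longrightarrow> t < T \<Longrightarrow> P t"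
proof -
  from assms(1) obtain b where "b < T" and b: "\<And>t. b < t \<Longrightarrow> t < T \<Longrightarrow> P t"
    by (auto simp: eventually_at_left_field)
  define t0 where "t0 = (max a b + T) / 2"
  have "max a b < t0" "t0 < T" using \<open>b < T\<close> assms(2) by (auto simp: t0_def)
  with b show ?thesis by (intro that[of t0]) auto
qed

lemma integral_has_real_derivative_atLeastLessThan:
  fixes f :: "real \<Rightarrow> real"
  assumes "continuous_on {a..<b} f" "x \<in> {a..<b}"
  shows "((\<lambda>t. integral {a..t} f) has_real_derivative f x) (at x within {a..<b})"
proof -
  obtain c where c: "x < c" "c < b" using assms(2) dense[of x b] by auto
  have "continuous_on {a..c} f" using assms(1) by (rule continuous_on_subset) (use c in auto)
  then have "((\<lambda>t. integral {a..t} f) has_real_derivative f x) (at x within {a..c})"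
    using assms(2) c by (intro integral_has_real_derivative) auto
  moreover have "at x within {a..<b} = at x within {a..c}"
  proof -
    have "{a..<b} \<inter> {..<c} = {a..c} \<inter> {..<c}"
      using c by auto
    then show ?thesis
      using c by (intro at_within_nhd[of x "{..<c}"]) auto
  qed
  ultimately show ?thesis by simp
qed

lemma has_real_derivative_at_interior:
  fixes f :: "real \<Rightarrow> real"
  assumes "(f has_real_derivative D) (at x within {a..<b})" "x \<in> {a<..<b}"
  shows "(f has_real_derivative D) (at x)"
  using assms(1) at_within_interior[of x "{a..<b}"] assms(2) by simp

lemma u_fun_pos [simp]: "0 < u_fun lam i t"
  by (simp add: u_fun_def)

lemma u_fun_nonneg [simp]: "0 \<le> u_fun lam i t"
  by (simp add: u_fun_def)

lemma u_fun_nonzero [simp]: "u_fun lam i t \<noteq> 0"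
  by (simp add: u_fun_def)

lemma u_fun_0 [simp]: "u_fun lam i 0 = 1"
  by (simp add: u_fun_def)

lemma u_fun_has_real_derivative:
  assumes "continuous_on {0..<T} (lam i)" "t \<in> {0..<T}"
  shows "(u_fun lam i has_real_derivative lam i t * u_fun lam i t) (at t within {0..<T})"
  unfolding u_fun_def[abs_def]
  using DERIV_chain2[OF DERIV_exp integral_has_real_derivative_atLeastLessThan[OF assms]]
  by (simp add: mult.commute)

lemma linear_ode_solution_eq:
  fixes r a :: "real \<Rightarrow> real"
  assumes a: "continuous_on {0..<T} a"
    and r: "\<And>t. t \<in> {0..<T} \<Longrightarrow> (r has_real_derivative a t * r t) (at t within {0..<T})"
    and t: "t \<in> {0..<T}"
  shows "r t = r 0 * exp (integral {0..t} a)"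
proof -
  define p where "p s = r s * exp (- integral {0..s} a)" for s
  have "(p has_real_derivative 0) (at s within {0..<T})" if "s \<in> {0..<T}" for s
  proof -
    have "((\<lambda>s. integral {0..s} a) has_real_derivative a s) (at s within {0..<T})"
      using a that by (rule integral_has_real_derivative_atLeastLessThan)
    then have "(p has_real_derivative
        a s * r s * exp (- integral {0..s} a) + r s * (exp (- integral {0..s} a) * - a s))
        (at s within {0..<T})"
      unfolding p_def[abs_def] by (auto intro!: derivative_eq_intros r that)
    then show ?thesis by (simp add: algebra_simps)
  qed
  then obtain c where "\<forall>s\<in>{0..<T}. p s = c"
    using has_field_derivative_zero_constant[of "{0..<T}" p] by auto
  then have "p t = p 0" using t by auto
  then show ?thesis by (simp add: p_def exp_minus field_simps)
qed

lemma filterlim_at_bot_if_deriv_le_inverse_dist: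
  fixes r r' :: "real \<Rightarrow> real"
  assumes "a < T" "0 < c"
    and r: "\<And>x. x \<in> {a..<T} \<Longrightarrow> (r has_real_derivative r' x) (at x)"
    and r'_le: "\<And>x. x \<in> {a..<T} \<Longrightarrow> r' x \<le> - c / (T - x)"
  shows "filterlim r at_bot (at_left T)"
proof -
  have bound: "r t \<le> r a - c * ln (T - a) + c * ln (T - t)" if t: "a \<le> t" "t < T" for t
  proof -
    have "r t - c * ln (T - t) \<le> r a - c * ln (T - a)"
    proof (rule DERIV_nonpos_imp_nonincreasing[where f = "\<lambda>s. r s - c * ln (T - s)"])
      fix x assume x: "a \<le> x" "x \<le> t"
      then have "((\<lambda>s. r s - c * ln (T - s)) has_real_derivative r' x + c / (T - x)) (at x)"
        using t by (auto intro!: derivative_eq_intros r simp: field_simps)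
      moreover have "r' x + c / (T - x) \<le> 0" using r'_le[of x] x t by simp
      ultimately show "\<exists>y. ((\<lambda>s. r s - c * ln (T - s)) has_real_derivative y) (at x) \<and> y \<le> 0"
        by blast
    qed (use t in simp)
    then show ?thesis by simp
  qed
  have "filterlim (\<lambda>t. - (r a - c * ln (T - a) + c * ln (T - t))) at_top (at_left T)"
    using \<open>0 < c\<close> by real_asymp
  moreover have "\<forall>\<^sub>F t in at_left T. - (r a - c * ln (T - a) + c * ln (T - t)) \<le> - r t"
    using eventually_at_left_real[OF \<open>a < T\<close>]
  proof eventually_elim
    case (elim t)
    then show ?case using bound[of t] by simp
  qed
  ultimately show ?thesis
    unfolding filterlim_uminus_at_bot by (rule filterlim_at_top_mono)
qed

locale riccati_system =
  fixes T :: real and I :: "nat set" and q :: "real \<Rightarrow> real" and lam :: "nat \<Rightarrow> real \<Rightarrow> real"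
  assumes T_pos: "0 < T"
    and lam_has_derivative: "\<And>i t. i \<in> I \<Longrightarrow> t \<in> {0..<T} \<Longrightarrow>
      (lam i has_real_derivative - (lam i t)\<^sup>2 + q t) (at t within {0..<T})"
    and q_bdd_below: "bdd_below (q ` {0..<T})"
begin

abbreviation u :: "nat \<Rightarrow> real \<Rightarrow> real" where
  "u \<equiv> u_fun lam"

lemma lam_continuous: "i \<in> I \<Longrightarrow> continuous_on {0..<T} (lam i)"
  by (rule DERIV_continuous_on[OF lam_has_derivative])

lemma lam_has_derivative_at:
  "i \<in> I \<Longrightarrow> t \<in> {0<..<T} \<Longrightarrow> (lam i has_real_derivative - (lam i t)\<^sup>2 + q t) (at t)"
  by (rule has_real_derivative_at_interior[OF lam_has_derivative]) auto

lemma u_has_derivative: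
  "i \<in> I \<Longrightarrow> t \<in> {0..<T} \<Longrightarrow> (u i has_real_derivative lam i t * u i t) (at t within {0..<T})"
  by (rule u_fun_has_real_derivative[OF lam_continuous])

lemma u_has_derivative_at:
  "i \<in> I \<Longrightarrow> t \<in> {0<..<T} \<Longrightarrow> (u i has_real_derivative lam i t * u i t) (at t)"
  by (rule has_real_derivative_at_interior[OF u_has_derivative]) auto

lemma u_mult_lam_diff_const:
  assumes "i \<in> I" "j \<in> I" "t \<in> {0..<T}"
  shows "u i t * u j t * (lam j t - lam i t) = lam j 0 - lam i 0"
proof -
  define w where "w s = u i s * u j s * (lam j s - lam i s)" for s
  have "(w has_real_derivative 0) (at s within {0..<T})" if "s \<in> {0..<T}" for s
    unfolding w_def[abs_def] using assms that
    by (auto intro!: derivative_eq_intros u_has_derivative lam_has_derivative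
        simp: algebra_simps power2_eq_square)
  then obtain c where "\<forall>s\<in>{0..<T}. w s = c"
    using has_field_derivative_zero_constant[of "{0..<T}" w] by auto
  then have "w t = w 0" using assms(3) T_pos by auto
  then show ?thesis by (simp add: w_def)
qed

lemma lam_diff_eq:
  assumes "i \<in> I" "j \<in> I" "t \<in> {0..<T}"
  shows "lam j t - lam i t = (lam j 0 - lam i 0) / (u i t * u j t)"
  using u_mult_lam_diff_const[OF assms] by (simp add: field_simps)

lemma lam_eq_iff_initial_eq:
  assumes "i \<in> I" "j \<in> I" "t \<in> {0..<T}"
  shows "lam i t = lam j t \<longleftrightarrow> lam i 0 = lam j 0"
  using lam_diff_eq[OF assms] by (auto simp: field_simps)

lemma q_lower_bound:
  obtains C where "0 \<le> C" "\<And>t. t \<in> {0..<T} \<Longrightarrow> - C \<le> q t"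
proof -
  obtain m where "\<forall>t\<in>{0..<T}. m \<le> q t"
    using q_bdd_below by (auto simp: bdd_below_def)
  then show ?thesis
    by (intro that[of "max 0 (- m)"]) force+
qed

lemma inverse_neg_lam_add_twice_mono:
  assumes i: "i \<in> I" and ts: "0 < t" "t \<le> s" "s < T" and "0 \<le> C"
    and q_ge: "\<And>x. x \<in> {t..s} \<Longrightarrow> - C \<le> q x"
    and lam_le: "\<And>x. x \<in> {t..s} \<Longrightarrow> lam i x \<le> - (C + 1)"
  shows "inverse (- lam i t) + 2 * t \<le> inverse (- lam i s) + 2 * s"
proof (rule DERIV_nonneg_imp_nondecreasing[where f = "\<lambda>s. inverse (- lam i s) + 2 * s"])
  fix x assume x: "t \<le> x" "x \<le> s"
  then have lam_x: "lam i x \<le> - (C + 1)" and x_in: "x \<in> {0<..<T}"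
    using lam_le ts by auto
  have "(C + 1) * 1 \<le> (- lam i x) * (- lam i x)"
    using lam_x \<open>0 \<le> C\<close> by (intro mult_mono) auto
  then have "C \<le> (lam i x)\<^sup>2" by (simp add: power2_eq_square)
  then have "0 \<le> 1 + q x / (lam i x)\<^sup>2"
    using q_ge[of x] x lam_x \<open>0 \<le> C\<close> by (auto simp: field_simps)
  moreover have "((\<lambda>s. inverse (- lam i s) + 2 * s) has_real_derivative 1 + q x / (lam i x)\<^sup>2) (at x)"
    using lam_x \<open>0 \<le> C\<close>
    by (auto intro!: derivative_eq_intros lam_has_derivative_at[OF i x_in]
        simp: field_simps power2_eq_square)
  ultimately show "\<exists>y. ((\<lambda>s. inverse (- lam i s) + 2 * s) has_real_derivative y) (at x) \<and> 0 \<le> y"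
    by blast
qed (use ts in simp)

lemma blowdown_rate:
  assumes i: "i \<in> I" and lim: "filterlim (lam i) at_bot (at_left T)"
  shows "\<forall>\<^sub>F t in at_left T. 1 \<le> 2 * (T - t) * - lam i t"
proof -
  obtain C where C: "0 \<le> C" "\<And>t. t \<in> {0..<T} \<Longrightarrow> - C \<le> q t"
    using q_lower_bound by blast
  have "\<forall>\<^sub>F t in at_left T. lam i t \<le> - (C + 1)"
    using lim by (simp add: filterlim_at_bot)
  then obtain t0 where t0: "0 < t0" "t0 < T"
    and big: "\<And>t. t0 \<le> t \<Longrightarrow> t < T \<Longrightarrow> lam i t \<le> - (C + 1)"
    using eventually_at_leftE T_pos by metis
  have rate: "1 \<le> 2 * (T - t) * - lam i t" if t: "t0 \<le> t" "t < T" for t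
  proof -
    define g where "g s = inverse (- lam i s) + 2 * s" for s
    have "\<forall>\<^sub>F s in at_left T. g t \<le> g s"
      using eventually_at_left_real[OF t(2)]
    proof eventually_elim
      case (elim s)
      then show ?case
        unfolding g_def using t t0 C big
        by (intro inverse_neg_lam_add_twice_mono[OF i, of t s C]) auto
    qed
    moreover have "(g \<longlongrightarrow> 0 + 2 * T) (at_left T)"
      unfolding g_def using lim
      by (intro tendsto_intros tendsto_inverse_0_at_top) (simp add: filterlim_uminus_at_bot[symmetric])
    ultimately have "g t \<le> 2 * T"
      using tendsto_lowerbound by fastforce
    moreover have "0 < - lam i t" using big[OF t] C(1) by linarith
    ultimately show ?thesis by (simp add: g_def field_simps)
  qed
  show ?thesis
    using eventually_at_left_real[OF t0(2)] by eventually_elim (use rate in auto)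
qed

lemma u_decay:
  assumes i: "i \<in> I" and lim: "filterlim (lam i) at_bot (at_left T)"
  obtains K where "0 < K" "\<forall>\<^sub>F t in at_left T. K * (u i t)\<^sup>2 \<le> T - t"
proof -
  obtain t0 where t0: "0 < t0" "t0 < T"
    and rate: "\<And>t. t0 \<le> t \<Longrightarrow> t < T \<Longrightarrow> 1 \<le> 2 * (T - t) * - lam i t"
    using eventually_at_leftE[OF blowdown_rate[OF assms] T_pos] by metis
  define h where "h s = (T - s) / (u i s)\<^sup>2" for s
  have h_mono: "h t0 \<le> h t" if t: "t0 \<le> t" "t < T" for t
  proof (rule DERIV_nonneg_imp_nondecreasing[where f = h])
    fix x assume x: "t0 \<le> x" "x \<le> t"
    then have x_in: "x \<in> {0<..<T}" using t0 t by auto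
    have "(h has_real_derivative (- 1 - 2 * (T - x) * lam i x) / (u i x)\<^sup>2) (at x)"
      unfolding h_def[abs_def]
      by (auto intro!: derivative_eq_intros u_has_derivative_at[OF i x_in]
          simp: field_simps power2_eq_square)
    moreover have "0 \<le> (- 1 - 2 * (T - x) * lam i x) / (u i x)\<^sup>2"
      using rate[of x] x t by simp
    ultimately show "\<exists>y. (h has_real_derivative y) (at x) \<and> 0 \<le> y" by blast
  qed (use t in simp)
  show ?thesis
  proof
    show "0 < h t0" using t0 by (simp add: h_def)
    show "\<forall>\<^sub>F t in at_left T. h t0 * (u i t)\<^sup>2 \<le> T - t"
      using eventually_at_left_real[OF t0(2)]
    proof eventually_elim
      case (elim t)
      then show ?case using h_mono[of t] by (simp add: h_def field_simps)
    qed
  qed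
qed

lemma u_tendsto_0:
  assumes "i \<in> I" "filterlim (lam i) at_bot (at_left T)"
  shows "(u i \<longlongrightarrow> 0) (at_left T)"
proof -
  obtain K where K: "0 < K" "\<forall>\<^sub>F t in at_left T. K * (u i t)\<^sup>2 \<le> T - t"
    using u_decay[OF assms] by blast
  have "((\<lambda>t. sqrt ((T - t) / K)) \<longlongrightarrow> 0) (at_left T)"
    using K(1) by real_asymp
  moreover have "\<forall>\<^sub>F t in at_left T. norm (u i t) \<le> sqrt ((T - t) / K)"
    using K(2)
  proof eventually_elim
    case (elim t)
    then have "(u i t)\<^sup>2 \<le> (T - t) / K" using K(1) by (simp add: field_simps)
    then show ?case using real_le_rsqrt by simp
  qed
  ultimately show ?thesis by (rule Lim_null_comparison[rotated])
qed

lemma u_eventually_ge: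
  assumes i: "i \<in> I" and lim: "filterlim (lam i) at_top (at_left T)"
  obtains m where "0 < m" "\<forall>\<^sub>F t in at_left T. m \<le> u i t"
proof -
  have "\<forall>\<^sub>F t in at_left T. 0 \<le> lam i t"
    using lim by (simp add: filterlim_at_top)
  then obtain t0 where t0: "0 < t0" "t0 < T"
    and nonneg: "\<And>t. t0 \<le> t \<Longrightarrow> t < T \<Longrightarrow> 0 \<le> lam i t"
    using eventually_at_leftE T_pos by metis
  have u_mono: "u i t0 \<le> u i t" if t: "t0 \<le> t" "t < T" for t
  proof (rule DERIV_nonneg_imp_nondecreasing[where f = "u i"])
    fix x assume x: "t0 \<le> x" "x \<le> t"
    then have "(u i has_real_derivative lam i x * u i x) (at x)" "0 \<le> lam i x * u i x"
      using t0 t nonneg[of x] by (auto intro!: u_has_derivative_at[OF i])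
    then show "\<exists>y. (u i has_real_derivative y) (at x) \<and> 0 \<le> y" by blast
  qed (use t in simp)
  show ?thesis
  proof
    show "0 < u i t0" by simp
    show "\<forall>\<^sub>F t in at_left T. u i t0 \<le> u i t"
      using eventually_at_left_real[OF t0(2)] by eventually_elim (use u_mono in auto)
  qed
qed

lemma u_ratio_has_derivative:
  assumes a: "a \<in> I" and b: "b \<in> I" and x: "x \<in> {0<..<T}"
  shows "((\<lambda>t. u a t / u b t) has_real_derivative (lam a 0 - lam b 0) / (u b x)\<^sup>2) (at x)"
proof -
  have "((\<lambda>t. u a t / u b t) has_real_derivative
      (lam a x * u a x * u b x - u a x * (lam b x * u b x)) / (u b x * u b x)) (at x)"
    using x by (intro DERIV_divide u_has_derivative_at a b) auto
  moreover have "(lam a x * u a x * u b x - u a x * (lam b x * u b x)) / (u b x * u b x)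
      = u b x * u a x * (lam a x - lam b x) / (u b x)\<^sup>2"
    by (simp add: algebra_simps power2_eq_square)
  ultimately show ?thesis
    using u_mult_lam_diff_const[OF b a] x by simp
qed

lemma initial_le_if_at_bot:
  assumes a: "a \<in> I" and b: "b \<in> I" and lim: "filterlim (lam b) at_bot (at_left T)"
  shows "lam b 0 \<le> lam a 0"
proof (rule ccontr)
  define c where "c = lam b 0 - lam a 0"
  assume "\<not> lam b 0 \<le> lam a 0"
  then have c: "0 < c" by (simp add: c_def)
  obtain K where K: "0 < K" "\<forall>\<^sub>F t in at_left T. K * (u b t)\<^sup>2 \<le> T - t"
    using u_decay[OF b lim] by blast
  obtain t0 where t0: "0 < t0" "t0 < T"
    and decay: "\<And>t. t0 \<le> t \<Longrightarrow> t < T \<Longrightarrow> K * (u b t)\<^sup>2 \<le> T - t"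
    using eventually_at_leftE[OF K(2) T_pos] by metis
  have deriv_le: "(lam a 0 - lam b 0) / (u b x)\<^sup>2 \<le> - (c * K) / (T - x)" if x: "x \<in> {t0..<T}" for x
  proof -
    have "K / (T - x) \<le> 1 / (u b x)\<^sup>2"
      using decay[of x] x by (simp add: field_simps)
    then have "c * (K / (T - x)) \<le> c * (1 / (u b x)\<^sup>2)"
      using c by (intro mult_left_mono) auto
    moreover have "(lam a 0 - lam b 0) / (u b x)\<^sup>2 = - (c * (1 / (u b x)\<^sup>2))"
      by (simp add: c_def field_simps)
    ultimately show ?thesis by simp
  qed
  have "filterlim (\<lambda>t. u a t / u b t) at_bot (at_left T)"
    using t0 c K(1) u_ratio_has_derivative[OF a b] deriv_le
    by (intro filterlim_at_bot_if_deriv_le_inverse_dist[where a = t0 and c = "c * K"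
          and r' = "\<lambda>x. (lam a 0 - lam b 0) / (u b x)\<^sup>2"]) auto
  then have "\<forall>\<^sub>F t in at_left T. u a t / u b t \<le> 0"
    by (simp add: filterlim_at_bot)
  then have "\<forall>\<^sub>F t in at_left T. False"
    by eventually_elim (metis divide_pos_pos not_le u_fun_pos)
  then show False by simp
qed

lemma initial_eq_if_at_bot:
  assumes "i \<in> I" "j \<in> I"
    and "filterlim (lam i) at_bot (at_left T)" "filterlim (lam j) at_bot (at_left T)"
  shows "lam i 0 = lam j 0"
  using initial_le_if_at_bot[of i j] initial_le_if_at_bot[of j i] assms by simp

lemma lam_ratio_tendsto_1:
  assumes i: "i \<in> I" and j: "j \<in> I"
    and lim_i: "filterlim (lam i) at_top (at_left T)" and lim_j: "filterlim (lam j) at_top (at_left T)"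
  shows "((\<lambda>t. lam i t / lam j t) \<longlongrightarrow> 1) (at_left T)"
proof -
  obtain mi where mi: "0 < mi" "\<forall>\<^sub>F t in at_left T. mi \<le> u i t"
    using u_eventually_ge[OF i lim_i] by blast
  obtain mj where mj: "0 < mj" "\<forall>\<^sub>F t in at_left T. mj \<le> u j t"
    using u_eventually_ge[OF j lim_j] by blast
  define B where "B = \<bar>lam j 0 - lam i 0\<bar> / (mi * mj)"
  have lam_j_ge: "\<forall>\<^sub>F t in at_left T. 1 \<le> lam j t"
    using lim_j by (simp add: filterlim_at_top)
  have "((\<lambda>t. (lam j t - lam i t) / lam j t) \<longlongrightarrow> 0) (at_left T)"
  proof (rule Lim_null_comparison)
    show "((\<lambda>t. B * inverse (lam j t)) \<longlongrightarrow> 0) (at_left T)"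
      using tendsto_mult_right_zero[OF tendsto_inverse_0_at_top[OF lim_j]] .
    show "\<forall>\<^sub>F t in at_left T. norm ((lam j t - lam i t) / lam j t) \<le> B * inverse (lam j t)"
      using eventually_at_left_real[OF T_pos] mi(2) mj(2) lam_j_ge
    proof eventually_elim
      case (elim t)
      have "mi * mj \<le> u i t * u j t"
        using elim mi(1) mj(1) by (intro mult_mono) auto
      then have "\<bar>lam j 0 - lam i 0\<bar> / (u i t * u j t) \<le> B"
        unfolding B_def using mi(1) mj(1) by (intro divide_left_mono) auto
      then have "\<bar>lam j 0 - lam i 0\<bar> / (u i t * u j t) * inverse (lam j t) \<le> B * inverse (lam j t)"
        using elim by (intro mult_right_mono) auto
      moreover have "norm ((lam j t - lam i t) / lam j t)
          = \<bar>lam j 0 - lam i 0\<bar> / (u i t * u j t) * inverse (lam j t)"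
        using lam_diff_eq[OF i j, of t] elim by (simp add: abs_mult abs_of_pos divide_inverse)
      ultimately show ?case by linarith
    qed
  qed
  then have "((\<lambda>t. 1 - (lam j t - lam i t) / lam j t) \<longlongrightarrow> 1 - 0) (at_left T)"
    by (intro tendsto_diff tendsto_const)
  moreover have "\<forall>\<^sub>F t in at_left T. 1 - (lam j t - lam i t) / lam j t = lam i t / lam j t"
    using lam_j_ge by eventually_elim (simp add: field_simps)
  ultimately show ?thesis by (simp add: Lim_transform_eventually)
qed

lemma initial_less_if_at_bot_at_top:
  assumes a: "a \<in> I" and b: "b \<in> I"
    and lim_a: "filterlim (lam a) at_bot (at_left T)" and lim_b: "filterlim (lam b) at_top (at_left T)"
  shows "lam a 0 < lam b 0"
proof -
  have "\<forall>\<^sub>F t in at_left T. lam a t \<le> 0"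
    using lim_a by (simp add: filterlim_at_bot)
  moreover have "\<forall>\<^sub>F t in at_left T. 1 \<le> lam b t"
    using lim_b by (simp add: filterlim_at_top)
  moreover note eventually_at_left_real[OF T_pos]
  ultimately have "\<forall>\<^sub>F t in at_left T. t \<in> {0..<T} \<and> lam a t \<noteq> lam b t"
    by eventually_elim auto
  then obtain t where t: "t \<in> {0..<T}" and "lam a t \<noteq> lam b t"
    using eventually_happens'[OF trivial_limit_at_left_real] by blast
  then have "lam a 0 \<noteq> lam b 0"
    using lam_eq_iff_initial_eq[OF a b t] by simp
  with initial_le_if_at_bot[OF b a lim_a] show ?thesis by simp
qed

lemma u_ratio_tendsto_0:
  assumes a: "a \<in> I" and b: "b \<in> I"
    and lim_a: "filterlim (lam a) at_bot (at_left T)" and lim_b: "filterlim (lam b) at_top (at_left T)"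
  shows "((\<lambda>t. u a t / u b t) \<longlongrightarrow> 0) (at_left T)"
proof -
  obtain m where m: "0 < m" "\<forall>\<^sub>F t in at_left T. m \<le> u b t"
    using u_eventually_ge[OF b lim_b] by blast
  have "\<forall>\<^sub>F t in at_left T. norm (u a t / u b t) \<le> u a t / m"
    using m(2)
  proof eventually_elim
    case (elim t)
    then have "u a t / u b t \<le> u a t / m"
      using m(1) by (intro divide_left_mono) auto
    then show ?case by (simp add: abs_of_pos)
  qed
  moreover have "((\<lambda>t. u a t / m) \<longlongrightarrow> 0) (at_left T)"
    using tendsto_divide_zero[OF u_tendsto_0[OF a lim_a]] .
  ultimately show ?thesis by (rule Lim_null_comparison)
qed

lemma u_linear_relation:
  assumes a: "a \<in> I" and j: "j \<in> I" and b: "b \<in> I" and t: "t \<in> {0..<T}"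
  shows "(lam b 0 - lam a 0) * u j t = (lam j 0 - lam a 0) * u b t + (lam b 0 - lam j 0) * u a t"
proof -
  have "(lam b 0 - lam a 0) * u j t - (lam j 0 - lam a 0) * u b t
      = u a t * (u j t * u b t * (lam b t - lam j t))"
    unfolding u_mult_lam_diff_const[OF a b t, symmetric] u_mult_lam_diff_const[OF a j t, symmetric]
    by (simp add: algebra_simps)
  also have "\<dots> = (lam b 0 - lam j 0) * u a t"
    using u_mult_lam_diff_const[OF j b t] by simp
  finally show ?thesis by simp
qed

lemma u_ratio_tendsto:
  assumes a: "a \<in> I" and j: "j \<in> I" and b: "b \<in> I"
    and lim_a: "filterlim (lam a) at_bot (at_left T)" and lim_b: "filterlim (lam b) at_top (at_left T)"
  shows "((\<lambda>t. u j t / u b t) \<longlongrightarrow> (lam j 0 - lam a 0) / (lam b 0 - lam a 0)) (at_left T)"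
proof -
  define dj where "dj = lam j 0 - lam a 0"
  define db where "db = lam b 0 - lam a 0"
  have "db \<noteq> 0"
    using initial_less_if_at_bot_at_top[OF a b lim_a lim_b] by (simp add: db_def)
  have "((\<lambda>t. dj / db + (db - dj) / db * (u a t / u b t)) \<longlongrightarrow> dj / db + (db - dj) / db * 0)
      (at_left T)"
    by (intro tendsto_add tendsto_mult tendsto_const u_ratio_tendsto_0 assms)
  moreover have "\<forall>\<^sub>F t in at_left T. dj / db + (db - dj) / db * (u a t / u b t) = u j t / u b t"
    using eventually_at_left_real[OF T_pos]
  proof eventually_elim
    case (elim t)
    then have key: "dj * u b t + (db - dj) * u a t = db * u j t"
      using u_linear_relation[OF a j b] by (simp add: dj_def db_def)
    have "dj / db + (db - dj) / db * (u a t / u b t) = (dj * u b t + (db - dj) * u a t) / (db * u b t)"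
      using \<open>db \<noteq> 0\<close> by (simp add: field_simps)
    also have "\<dots> = u j t / u b t"
      using \<open>db \<noteq> 0\<close> by (simp only: key) simp
    finally show ?case .
  qed
  ultimately have "((\<lambda>t. u j t / u b t) \<longlongrightarrow> dj / db + (db - dj) / db * 0) (at_left T)"
    by (rule Lim_transform_eventually)
  then show ?thesis by (simp add: dj_def db_def)
qed

end

lemma is_solution_riccati_system:
  assumes sol: "is_solution n k cb rho0 lam0 T lam rho" and "0 \<le> k" "0 < rho0"
  shows "riccati_system T {1..n} (\<lambda>t. k / real n * (rho t - cb)) lam"
proof -
  have T: "0 < T" and rho_0: "rho 0 = rho0"
    and lam_deriv: "\<And>i t. i \<in> {1..n} \<Longrightarrow> t \<in> {0..<T} \<Longrightarrow>
      (lam i has_real_derivative - (lam i t)\<^sup>2 + k / real n * (rho t - cb)) (at t within {0..<T})"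
    and rho_deriv: "\<And>t. t \<in> {0..<T} \<Longrightarrow>
      (rho has_real_derivative (- (\<Sum>i=1..n. lam i t)) * rho t) (at t within {0..<T})"
    using sol by (auto simp: is_solution_def mult.commute)
  have "continuous_on {0..<T} (lam i)" if "i \<in> {1..n}" for i
    by (rule DERIV_continuous_on[OF lam_deriv[OF that]])
  then have "continuous_on {0..<T} (\<lambda>t. - (\<Sum>i=1..n. lam i t))"
    by (intro continuous_intros) auto
  then have "rho t = rho0 * exp (integral {0..t} (\<lambda>t. - (\<Sum>i=1..n. lam i t)))"
    if "t \<in> {0..<T}" for t
    using linear_ode_solution_eq[OF _ rho_deriv that] rho_0 by simp
  then have "k / real n * (0 - cb) \<le> k / real n * (rho t - cb)" if "t \<in> {0..<T}" for t
    using that \<open>0 \<le> k\<close> \<open>0 < rho0\<close> by (intro mult_left_mono) auto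
  then have "bdd_below ((\<lambda>t. k / real n * (rho t - cb)) ` {0..<T})"
    by (rule bdd_belowI2)
  with T lam_deriv show ?thesis
    by unfold_locales auto
qed

theorem lemma3p1:
  fixes n J1 J2 :: nat and k cb rho0 tB :: real
    and lam0 :: "nat \<Rightarrow> real" and lam :: "nat \<Rightarrow> real \<Rightarrow> real" and rho :: "real \<Rightarrow> real"
  assumes "n \<ge> 2" and "k > 0" and "cb > 0" and "rho0 > 0"
    and "\<forall>i j. 1 \<le> i \<longrightarrow> i \<le> j \<longrightarrow> j \<le> n \<longrightarrow> lam0 i \<le> lam0 j"
    and "0 < tB"
    and "maximal_solution n k cb rho0 lam0 tB lam rho"
    and "1 \<le> J1" and "J1 \<le> J2" and "J2 \<le> n"
    and "\<forall>i\<in>{1..J1}. filterlim (lam i) at_bot (at_left tB)"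
    and "\<forall>i\<in>{J2<..n}. filterlim (lam i) at_top (at_left tB)"
  shows "(\<forall>i\<in>{1..J1}. \<forall>j\<in>{1..J1}. lam0 i = lam0 j \<and> (\<forall>t\<in>{0..<tB}. lam i t = lam j t))
    \<and> (\<forall>i\<in>{J2<..n}. \<forall>j\<in>{J2<..n}. ((\<lambda>t. lam i t / lam j t) \<longlongrightarrow> 1) (at_left tB))
    \<and> (\<forall>j\<in>{J2<..<n}. ((\<lambda>t. u_fun lam j t / u_fun lam n t) \<longlongrightarrow>
          (lam0 j - lam0 1) / (lam0 n - lam0 1)) (at_left tB))"
proof -
  have sol: "is_solution n k cb rho0 lam0 tB lam rho"
    using assms(7) by (simp add: maximal_solution_def)
  interpret riccati_system tB "{1..n}" "\<lambda>t. k / real n * (rho t - cb)" lam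
    using is_solution_riccati_system[OF sol] assms(2,4) by simp
  have lam_0: "lam i 0 = lam0 i" if "i \<in> {1..n}" for i
    using sol that by (simp add: is_solution_def)
  have bot: "i \<in> {1..n}" "filterlim (lam i) at_bot (at_left tB)" if "i \<in> {1..J1}" for i
    using that assms(9-11) by auto
  have top: "i \<in> {1..n}" "filterlim (lam i) at_top (at_left tB)" if "i \<in> {J2<..n}" for i
    using that assms(8,9,12) by auto
  have bot_initial_eq: "lam i 0 = lam j 0" if "i \<in> {1..J1}" "j \<in> {1..J1}" for i j
    using bot[OF that(1)] bot[OF that(2)] by (intro initial_eq_if_at_bot)
  show ?thesis
  proof (intro conjI ballI)
    fix i j assume ij: "i \<in> {1..J1}" "j \<in> {1..J1}"
    show "lam0 i = lam0 j"
      using bot_initial_eq[OF ij] lam_0[OF bot(1)[OF ij(1)]] lam_0[OF bot(1)[OF ij(2)]] by simp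
    fix t assume t: "t \<in> {0..<tB}"
    show "lam i t = lam j t"
      using lam_eq_iff_initial_eq[OF bot(1)[OF ij(1)] bot(1)[OF ij(2)] t] bot_initial_eq[OF ij] by simp
  next
    fix i j assume "i \<in> {J2<..n}" "j \<in> {J2<..n}"
    then show "((\<lambda>t. lam i t / lam j t) \<longlongrightarrow> 1) (at_left tB)"
      using top by (intro lam_ratio_tendsto_1)
  next
    fix j assume "j \<in> {J2<..<n}"
    then have j: "j \<in> {1..n}" and one: "1 \<in> {1..J1}" and n: "n \<in> {J2<..n}"
      using assms(8,9) by auto
    have "((\<lambda>t. u_fun lam j t / u_fun lam n t) \<longlongrightarrow> (lam j 0 - lam 1 0) / (lam n 0 - lam 1 0))
        (at_left tB)"
      using bot[OF one] top[OF n] j by (intro u_ratio_tendsto)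
    then show "((\<lambda>t. u_fun lam j t / u_fun lam n t) \<longlongrightarrow> (lam0 j - lam0 1) / (lam0 n - lam0 1))
        (at_left tB)"
      using lam_0 j bot(1)[OF one] top(1)[OF n] by simp
  qed
qed

end
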